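(* If $C\subseteq 2^{X}$ is an ample class, then the cube complex $Q(C)$ is collapsible.
   Context: A cube of $2^X$ is $\{T\cup Z:Z\subseteq Y\}$ with $Y\subseteq X$, $T\subseteq X\setminus Y$ ($Y$ its support, $|Y|$ its dimension). $Y$ is shattered by $C$ if $\{c\cap Y:c\in C\}=2^Y$; $C$ is ample if every set shattered by $C$ is the support of a cube contained in $C$. The cube complex $Q(C)$ is the set of all cubes of $2^X$ contained in $C$ (its faces, including single vertices). A free face of a cube complex is a face $Q$ strictly contained in exactly one other face $Q'$; an elementary collapse deletes $Q$ and $Q'$. The complex is collapsible if it can be reduced to a single vertex by a sequence of elementary collapses. *)

theory Defs
  imports Main
begin

definition cube :: "'a set \<Rightarrow> 'a set \<Rightarrow> 'a set set" where
  "cube T Y = {T \<union> Z | Z. Z \<subseteq> Y}"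

definition is_cube :: "'a set \<Rightarrow> 'a set set \<Rightarrow> bool" where
  "is_cube X Q \<longleftrightarrow> (\<exists>Y T. Y \<subseteq> X \<and> T \<subseteq> X - Y \<and> Q = cube T Y)"

definition shatters :: "'a set set \<Rightarrow> 'a set \<Rightarrow> bool" where
  "shatters C Y \<longleftrightarrow> (\<lambda>c. c \<inter> Y) ` C = Pow Y"

definition ample :: "'a set \<Rightarrow> 'a set set \<Rightarrow> bool" where
  "ample X C \<longleftrightarrow>
     (\<forall>Y. shatters C Y \<longrightarrow> (\<exists>T. Y \<subseteq> X \<and> T \<subseteq> X - Y \<and> cube T Y \<subseteq> C))"

definition cube_complex :: "'a set \<Rightarrow> 'a set set \<Rightarrow> 'a set set set" where
  "cube_complex X C = {Q. is_cube X Q \<and> Q \<subseteq> C}"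

definition free_face :: "'a set set set \<Rightarrow> 'a set set \<Rightarrow> 'a set set \<Rightarrow> bool" where
  "free_face K Q Q' \<longleftrightarrow> Q \<in> K \<and> Q' \<in> K \<and> Q \<subset> Q' \<and> (\<forall>R\<in>K. Q \<subset> R \<longrightarrow> R = Q')"

definition elementary_collapse :: "'a set set set \<Rightarrow> 'a set set set \<Rightarrow> bool" where
  "elementary_collapse K K' \<longleftrightarrow> (\<exists>Q Q'. free_face K Q Q' \<and> K' = K - {Q, Q'})"

definition collapsible :: "'a set set set \<Rightarrow> bool" where
  "collapsible K \<longleftrightarrow> (\<exists>v. elementary_collapse\<^sup>*\<^sup>* K {{v}})"

end

theory Submission
  imports Defs
begin

text \<open>
  We prove the relative statement: if \<open>S \<subseteq> C\<close> are ample and \<open>S \<noteq> {}\<close>, then \<open>Q(C)\<close>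
  collapses onto \<open>Q(S)\<close>; the theorem is the case of a single vertex \<open>S = {v}\<close>. Pick a coordinate \<open>x\<close> on which \<open>C\<close> is not constant.
  Then \<open>Q(C)\<close> is the union of the complexes of the two halfspaces of \<open>C\<close> along \<open>x\<close> and of the
  prisms over the faces of the carrier of \<open>C\<close> (the elements of one halfspace whose neighbour
  across \<open>x\<close> is in \<open>C\<close>); halfspaces and carriers of ample classes are again ample.
  If \<open>S\<close> meets both halfspaces, collapse the prisms over the carrier of \<open>C\<close> onto those over
  the carrier of \<open>S\<close>, and then each halfspace of \<open>C\<close> onto that of \<open>S\<close>. If \<open>S\<close> lies in one
  halfspace, collapse the other halfspace onto its carrier and remove each remaining carrier face
  together with its prism, largest faces first; this leaves the halfspace containing \<open>S\<close>.
\<close>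

section \<open>Collapses\<close>

abbreviation collapses :: "'a set set set \<Rightarrow> 'a set set set \<Rightarrow> bool" where
  "collapses \<equiv> elementary_collapse\<^sup>*\<^sup>*"

lemma collapses_subset: "collapses K L \<Longrightarrow> L \<subseteq> K"
  by (induction rule: rtranclp_induct) (auto simp: elementary_collapse_def)

lemma collapses_union:
  assumes "collapses K L" and "\<forall>F\<in>K - L. \<forall>G\<in>M. \<not> F \<subset> G" and "M \<inter> K = {}"
  shows "collapses (K \<union> M) (L \<union> M)"
  using assms
proof (induction rule: converse_rtranclp_induct)
  case base
  then show ?case by simp
next
  case (step K K')
  then obtain Q Q' where ff: "free_face K Q Q'" and K': "K' = K - {Q, Q'}"
    unfolding elementary_collapse_def by blast
  have "Q \<notin> L"
    using collapses_subset[OF step.hyps(2)] K' by blast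
  then have "free_face (K \<union> M) Q Q'"
    using ff step.prems unfolding free_face_def by blast
  moreover have "K \<union> M - {Q, Q'} = K' \<union> M"
    using ff K' step.prems(2) unfolding free_face_def by blast
  ultimately have "elementary_collapse (K \<union> M) (K' \<union> M)"
    unfolding elementary_collapse_def by blast
  moreover have "collapses (K' \<union> M) (L \<union> M)"
    using step.IH step.prems K' by blast
  ultimately show ?case
    by (rule converse_rtranclp_into_rtranclp)
qed

lemma free_face_image:
  assumes "free_face K Q Q'" and emb: "\<forall>F\<in>K. \<forall>G\<in>K. \<phi> F \<subseteq> \<phi> G \<longleftrightarrow> F \<subseteq> G"
  shows "free_face (\<phi> ` K) (\<phi> Q) (\<phi> Q')"
  unfolding free_face_def
proof (intro conjI ballI impI)
  have Q: "Q \<in> K" "Q' \<in> K" "Q \<subset> Q'" and top: "\<forall>R\<in>K. Q \<subset> R \<longrightarrow> R = Q'"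
    using assms(1) unfolding free_face_def by auto
  show "\<phi> Q \<in> \<phi> ` K" "\<phi> Q' \<in> \<phi> ` K"
    using Q by auto
  show "\<phi> Q \<subset> \<phi> Q'"
    using Q emb by blast
  fix R assume "R \<in> \<phi> ` K" and "\<phi> Q \<subset> R"
  then obtain R0 where "R0 \<in> K" "R = \<phi> R0" "Q \<subset> R0"
    using Q emb by blast
  then show "R = \<phi> Q'"
    using top by blast
qed

lemma collapses_image:
  assumes "collapses K L" and "\<forall>F\<in>K. \<forall>G\<in>K. \<phi> F \<subseteq> \<phi> G \<longleftrightarrow> F \<subseteq> G"
  shows "collapses (\<phi> ` K) (\<phi> ` L)"
  using assms
proof (induction rule: converse_rtranclp_induct)
  case base
  then show ?case by simp
next
  case (step K K')
  then obtain Q Q' where ff: "free_face K Q Q'" and K': "K' = K - {Q, Q'}"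
    unfolding elementary_collapse_def by blast
  have "inj_on \<phi> K"
    using step.prems by (auto intro!: inj_onI subset_antisym)
  then have "\<phi> ` K - {\<phi> Q, \<phi> Q'} = \<phi> ` K'"
    using ff K' inj_on_image_set_diff[of \<phi> K K "{Q, Q'}"] unfolding free_face_def by auto
  then have "elementary_collapse (\<phi> ` K) (\<phi> ` K')"
    using free_face_image[OF ff step.prems] unfolding elementary_collapse_def by blast
  moreover have "collapses (\<phi> ` K') (\<phi> ` L)"
    using step.IH step.prems K' by blast
  ultimately show ?case
    by (rule converse_rtranclp_into_rtranclp)
qed

lemma matching_free_face:
  assumes "inj_on g L" and "\<And>F. F \<in> L \<Longrightarrow> F \<subset> g F"
    and "L \<inter> g ` L = {}" and "(L \<union> g ` L) \<inter> K = {}"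
    and up: "\<And>F G. F \<in> L \<Longrightarrow> G \<in> K \<union> L \<union> g ` L \<Longrightarrow> F \<subset> G \<Longrightarrow>
      G = g F \<or> (\<exists>F'\<in>L. F \<subset> F' \<and> (G = F' \<or> G = g F'))"
    and "S \<subseteq> L" and "F \<in> S" and max: "\<And>F'. F' \<in> S \<Longrightarrow> F \<subseteq> F' \<Longrightarrow> F = F'"
  shows "free_face (K \<union> S \<union> g ` S) F (g F)"
  unfolding free_face_def
proof (intro conjI ballI impI)
  show "F \<in> K \<union> S \<union> g ` S" "g F \<in> K \<union> S \<union> g ` S" "F \<subset> g F"
    using assms(2,6,7) by auto
  fix G assume G: "G \<in> K \<union> S \<union> g ` S" and "F \<subset> G"
  then have "G = g F \<or> (\<exists>F'\<in>L. F \<subset> F' \<and> (G = F' \<or> G = g F'))"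
    using up[of F G] assms(6,7) by blast
  moreover have "F' \<in> S" if F': "F' \<in> L" and "G = F' \<or> G = g F'" for F'
  proof -
    have "G \<in> S \<union> g ` S"
      using G F' \<open>G = F' \<or> G = g F'\<close> assms(4) by blast
    then consider "G = F'" "G \<in> S" | F'' where "G = g F'" "F'' \<in> S" "G = g F''"
      using F' \<open>G = F' \<or> G = g F'\<close> assms(3,6) by blast
    then show ?thesis
      by cases (use F' assms(6) inj_onD[OF assms(1)] in auto)
  qed
  ultimately show "G = g F"
    using max \<open>F \<subset> G\<close> by blast
qed

lemma collapses_matching:
  assumes "finite L" and "inj_on g L" and "\<And>F. F \<in> L \<Longrightarrow> F \<subset> g F"
    and "L \<inter> g ` L = {}" and "(L \<union> g ` L) \<inter> K = {}"
    and "\<And>F G. F \<in> L \<Longrightarrow> G \<in> K \<union> L \<union> g ` L \<Longrightarrow> F \<subset> G \<Longrightarrow>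
      G = g F \<or> (\<exists>F'\<in>L. F \<subset> F' \<and> (G = F' \<or> G = g F'))"
  shows "collapses (K \<union> L \<union> g ` L) K"
proof -
  have "collapses (K \<union> S \<union> g ` S) K" if "S \<subseteq> L" for S
    using finite_subset[OF that assms(1)] that
  proof (induction S rule: finite_remove_induct)
    case empty
    then show ?case by simp
  next
    case (remove S)
    obtain F where F: "F \<in> S" and "\<And>F'. F' \<in> S \<Longrightarrow> F \<subseteq> F' \<Longrightarrow> F = F'"
      using finite_has_maximal[OF remove.hyps(1,2)] by blast
    then have ff: "free_face (K \<union> S \<union> g ` S) F (g F)"
      using matching_free_face[OF assms(2-6) remove.prems] by blast
    have "g ` (S - {F}) = g ` S - {g F}"
      using inj_on_image_set_diff[OF assms(2), of S "{F}"] F remove.prems by auto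
    moreover have "F \<notin> K" "g F \<notin> K" "F \<notin> g ` S" "g F \<notin> S"
      using F remove.prems assms(4,5) by blast+
    ultimately have "K \<union> S \<union> g ` S - {F, g F} = K \<union> (S - {F}) \<union> g ` (S - {F})"
      by blast
    with ff have "elementary_collapse (K \<union> S \<union> g ` S) (K \<union> (S - {F}) \<union> g ` (S - {F}))"
      unfolding elementary_collapse_def by (intro exI[of _ F] exI[of _ "g F"]) simp
    moreover have "collapses (K \<union> (S - {F}) \<union> g ` (S - {F})) K"
      using remove.prems by (intro remove.IH[OF F]) blast
    ultimately show ?case
      by (rule converse_rtranclp_into_rtranclp)
  qed
  then show ?thesis
    by simp
qed

section \<open>Cubes as intervals of the subset order\<close>

lemma cube_eq_interval: "cube T Y = {T..T \<union> Y}"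
proof (intro set_eqI iffI)
  fix c assume "c \<in> {T..T \<union> Y}"
  then have "c = T \<union> (c - T)" "c - T \<subseteq> Y"
    by auto
  then show "c \<in> cube T Y"
    unfolding cube_def by blast
qed (auto simp: cube_def)

lemma is_cube_iff_interval: "is_cube X Q \<longleftrightarrow> (\<exists>T U. T \<subseteq> U \<and> U \<subseteq> X \<and> Q = {T..U})"
proof
  assume "is_cube X Q"
  then show "\<exists>T U. T \<subseteq> U \<and> U \<subseteq> X \<and> Q = {T..U}"
    unfolding is_cube_def cube_eq_interval by blast
next
  assume "\<exists>T U. T \<subseteq> U \<and> U \<subseteq> X \<and> Q = {T..U}"
  then obtain T U where "T \<subseteq> U" "U \<subseteq> X" "Q = {T..U}"
    by blast
  moreover have "U = T \<union> (U - T)"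
    using \<open>T \<subseteq> U\<close> by blast
  ultimately show "is_cube X Q"
    unfolding is_cube_def cube_eq_interval by (intro exI[of _ "U - T"] exI[of _ T]) auto
qed

lemma cube_complex_iff:
  "Q \<in> cube_complex X C \<longleftrightarrow> (\<exists>T U. T \<subseteq> U \<and> U \<subseteq> X \<and> Q = {T..U}) \<and> Q \<subseteq> C"
  unfolding cube_complex_def is_cube_iff_interval by blast

lemma face_nonempty: "Q \<in> cube_complex X C \<Longrightarrow> Q \<noteq> {}"
  unfolding cube_complex_iff by auto

lemma face_subset: "Q \<in> cube_complex X C \<Longrightarrow> Q \<subseteq> C"
  unfolding cube_complex_def by blast

lemma face_of_subclass: "Q \<in> cube_complex X C \<Longrightarrow> Q \<subseteq> D \<Longrightarrow> Q \<in> cube_complex X D"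
  unfolding cube_complex_def by blast

lemma cube_complex_mono: "C \<subseteq> D \<Longrightarrow> cube_complex X C \<subseteq> cube_complex X D"
  unfolding cube_complex_def by blast

lemma finite_cube_complex: "finite X \<Longrightarrow> finite (cube_complex X C)"
  by (rule finite_subset[of _ "Pow (Pow X)"]) (auto simp: cube_complex_iff, blast)

lemma cube_complex_singleton:
  assumes "v \<subseteq> X"
  shows "cube_complex X {v} = {{v}}"
proof (intro equalityI subsetI)
  fix Q assume "Q \<in> cube_complex X {v}"
  then show "Q \<in> {{v}}"
    using face_nonempty face_subset by blast
next
  have "{v} \<in> cube_complex X {v}"
    unfolding cube_complex_iff using assms by (intro conjI exI[of _ v]) auto
  then show "Q \<in> cube_complex X {v}" if "Q \<in> {{v}}" for Q
    using that by simp
qed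

section \<open>Halfspaces, carriers and prisms\<close>

definition flip :: "'a \<Rightarrow> 'a set \<Rightarrow> 'a set" where
  "flip x c = (if x \<in> c then c - {x} else insert x c)"

definition side :: "'a \<Rightarrow> bool \<Rightarrow> 'a set set" where
  "side x b = {c. (x \<in> c) = b}"

text \<open>\<open>carrier x b C\<close> is only the \<open>b\<close>-side of the carrier of \<open>C\<close> in direction \<open>x\<close>; the whole
  carrier is \<open>carrier x b C \<union> flip x ` carrier x b C\<close>.\<close>

definition carrier :: "'a \<Rightarrow> bool \<Rightarrow> 'a set set \<Rightarrow> 'a set set" where
  "carrier x b C = {c \<in> C \<inter> side x b. flip x c \<in> C}"

definition prism :: "'a \<Rightarrow> 'a set set \<Rightarrow> 'a set set" where
  "prism x F = F \<union> flip x ` F"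

lemma flip_flip [simp]: "flip x (flip x c) = c"
  unfolding flip_def by auto

lemma mem_flip [simp]: "x \<in> flip x c \<longleftrightarrow> x \<notin> c"
  unfolding flip_def by auto

lemma flip_inter: "x \<notin> Y \<Longrightarrow> flip x c \<inter> Y = c \<inter> Y"
  unfolding flip_def by auto

lemma mem_side [simp]: "c \<in> side x b \<longleftrightarrow> (x \<in> c) = b"
  unfolding side_def by simp

lemma carrier_subset: "carrier x b C \<subseteq> C \<inter> side x b"
  unfolding carrier_def by blast

lemma flip_carrier_subset: "flip x ` carrier x b C \<subseteq> C \<inter> side x (\<not> b)"
  unfolding carrier_def by auto

lemma carrier_mono: "S \<subseteq> C \<Longrightarrow> carrier x b S \<subseteq> carrier x b C"
  unfolding carrier_def by blast

lemma prism_inter_side: "F \<subseteq> side x b \<Longrightarrow> prism x F \<inter> side x b = F"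
  unfolding prism_def by auto

lemma prism_not_subset_side:
  assumes "F \<noteq> {}"
  shows "\<not> prism x F \<subseteq> side x b"
proof -
  obtain c where "c \<in> F"
    using assms by blast
  then have "c \<in> prism x F" "flip x c \<in> prism x F"
    unfolding prism_def by auto
  then show ?thesis
    using mem_flip[of x c] unfolding side_def by blast
qed

lemma prism_subset_prism_iff:
  assumes "F \<subseteq> side x b" and "G \<subseteq> side x b"
  shows "prism x F \<subseteq> prism x G \<longleftrightarrow> F \<subseteq> G"
proof
  assume "prism x F \<subseteq> prism x G"
  then have "prism x F \<inter> side x b \<subseteq> prism x G \<inter> side x b"
    by blast
  then show "F \<subseteq> G"
    by (simp only: prism_inter_side[OF assms(1)] prism_inter_side[OF assms(2)])
qed (auto simp: prism_def)

lemma prism_subset: "F \<subseteq> carrier x b C \<Longrightarrow> prism x F \<subseteq> C"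
  unfolding prism_def carrier_def by auto

lemma prism_interval:
  assumes "T \<subseteq> U" and "x \<in> T \<longleftrightarrow> x \<in> U"
  shows "prism x {T..U} = {T - {x}..insert x U}"
proof (intro equalityI subsetI)
  fix c assume "c \<in> {T - {x}..insert x U}"
  then have "c \<in> {T..U} \<or> flip x c \<in> {T..U}"
    using assms unfolding flip_def by auto
  then show "c \<in> prism x {T..U}"
    unfolding prism_def by (metis UnI1 UnI2 flip_flip image_eqI)
qed (use assms in \<open>auto simp: prism_def flip_def\<close>)

lemma interval_inter_side:
  assumes "x \<notin> T" and "x \<in> U"
  shows "{T..U} \<inter> side x b = {(if b then insert x T else T)..(if b then U else U - {x})}"
  using assms by (cases b) auto

lemma prism_interval_inter_side:
  assumes "x \<notin> T" and "x \<in> U" and "T \<subseteq> U"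
  shows "prism x ({T..U} \<inter> side x b) = {T..U}"
  using assms subset_Diff_insert[of T U x "{}"]
  by (cases b) (simp_all add: interval_inter_side prism_interval insert_absorb subset_insertI2)

lemma face_subset_side: "F \<in> cube_complex X (C \<inter> side x b) \<Longrightarrow> F \<subseteq> side x b"
  using face_subset le_inf_iff by metis

lemma carrier_face_subset_side: "F \<in> cube_complex X (carrier x b C) \<Longrightarrow> F \<subseteq> side x b"
  using face_subset carrier_subset le_inf_iff order_trans by metis

lemma prism_face:
  assumes "x \<in> X" and F: "F \<in> cube_complex X (carrier x b C)"
  shows "prism x F \<in> cube_complex X C"
proof -
  obtain T U where TU: "T \<subseteq> U" "U \<subseteq> X" "F = {T..U}"
    using F unfolding cube_complex_iff by blast
  then have "T \<in> F" "U \<in> F"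
    by auto
  then have "T \<in> side x b" "U \<in> side x b"
    using carrier_face_subset_side[OF F] by blast+
  then have "prism x F = {T - {x}..insert x U}"
    using TU(3) prism_interval[OF TU(1)] by simp
  moreover have "prism x F \<subseteq> C"
    by (rule prism_subset[OF face_subset[OF F]])
  moreover have "T - {x} \<subseteq> insert x U" "insert x U \<subseteq> X"
    using TU \<open>x \<in> X\<close> by auto
  ultimately show ?thesis
    unfolding cube_complex_iff by blast
qed

lemma prism_face_not_subset_side:
  "F \<in> cube_complex X (carrier x b C) \<Longrightarrow> \<not> prism x F \<subseteq> side x b'"
  using prism_not_subset_side face_nonempty by metis

lemma face_psubset_prism:
  assumes "F \<in> cube_complex X (carrier x b C)"
  shows "F \<subset> prism x F"
proof -
  have "prism x F \<noteq> F"
    using carrier_face_subset_side[OF assms] prism_face_not_subset_side[OF assms] by metis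
  then show ?thesis
    unfolding prism_def by blast
qed

lemma inj_on_prism: "inj_on (prism x) (cube_complex X (carrier x b C))"
proof (rule inj_onI)
  fix F G assume F: "F \<in> cube_complex X (carrier x b C)" and G: "G \<in> cube_complex X (carrier x b C)"
    and "prism x F = prism x G"
  then show "F = G"
    using prism_subset_prism_iff[OF carrier_face_subset_side[OF F] carrier_face_subset_side[OF G]]
      prism_subset_prism_iff[OF carrier_face_subset_side[OF G] carrier_face_subset_side[OF F]]
    by (metis subset_antisym order_refl)
qed

lemma crossing_face_in_prisms:
  assumes TU: "T \<subseteq> U" "U \<subseteq> X" and "{T..U} \<subseteq> C" and x: "x \<notin> T" "x \<in> U"
  shows "{T..U} \<in> prism x ` cube_complex X (carrier x b C)"
proof -
  let ?T = "if b then insert x T else T" and ?U = "if b then U else U - {x}"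
  have "flip x c \<in> {T..U}" if "c \<in> {T..U}" for c
    using that x unfolding flip_def by auto
  then have "{T..U} \<inter> side x b \<subseteq> carrier x b C"
    using \<open>{T..U} \<subseteq> C\<close> unfolding carrier_def by auto
  moreover have "{T..U} \<inter> side x b = {?T..?U}"
    by (rule interval_inter_side[OF x])
  moreover have "?T \<subseteq> ?U" "?U \<subseteq> X"
    using TU x by auto
  ultimately have "{T..U} \<inter> side x b \<in> cube_complex X (carrier x b C)"
    unfolding cube_complex_iff by blast
  moreover have "prism x ({T..U} \<inter> side x b) = {T..U}"
    by (rule prism_interval_inter_side[OF x TU(1)])
  ultimately show ?thesis
    by (metis image_eqI)
qed

lemma cube_complex_decomp:
  assumes "x \<in> X"
  shows "cube_complex X C = cube_complex X (C \<inter> side x b) \<union> cube_complex X (C \<inter> side x (\<not> b))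
    \<union> prism x ` cube_complex X (carrier x b' C)"
proof (intro equalityI subsetI)
  fix Q assume Q: "Q \<in> cube_complex X C"
  then obtain T U where TU: "T \<subseteq> U" "U \<subseteq> X" "Q = {T..U}" and "Q \<subseteq> C"
    unfolding cube_complex_iff by blast
  have "Q \<subseteq> side x True" if "x \<in> T"
    using that TU by auto
  moreover have "Q \<subseteq> side x False" if "x \<notin> U"
    using that TU by auto
  ultimately consider b'' where "Q \<subseteq> side x b''" | "x \<notin> T" "x \<in> U"
    by blast
  then show "Q \<in> cube_complex X (C \<inter> side x b) \<union> cube_complex X (C \<inter> side x (\<not> b))
    \<union> prism x ` cube_complex X (carrier x b' C)"
  proof cases
    case (1 b'')
    then have "Q \<in> cube_complex X (C \<inter> side x b'')"
      by (intro face_of_subclass[OF Q]) (simp add: \<open>Q \<subseteq> C\<close>)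
    then show ?thesis
      by (cases "b'' = b") auto
  next
    case 2
    then show ?thesis
      using crossing_face_in_prisms[OF TU(1,2) _ 2, of C b'] \<open>Q \<subseteq> C\<close> TU(3) by blast
  qed
next
  fix Q assume "Q \<in> cube_complex X (C \<inter> side x b) \<union> cube_complex X (C \<inter> side x (\<not> b))
    \<union> prism x ` cube_complex X (carrier x b' C)"
  moreover have "cube_complex X (C \<inter> side x b'') \<subseteq> cube_complex X C" for b''
    by (rule cube_complex_mono) simp
  ultimately show "Q \<in> cube_complex X C"
    using prism_face[OF assms] by blast
qed

section \<open>Halfspaces and carriers of ample classes are ample\<close>

lemma shatters_iff: "shatters C Y \<longleftrightarrow> (\<forall>P\<subseteq>Y. \<exists>c\<in>C. c \<inter> Y = P)"
proof
  assume "shatters C Y"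
  then have "P \<in> (\<lambda>c. c \<inter> Y) ` C" if "P \<subseteq> Y" for P
    using that unfolding shatters_def by blast
  then show "\<forall>P\<subseteq>Y. \<exists>c\<in>C. c \<inter> Y = P"
    by (metis imageE)
qed (auto simp: shatters_def image_iff)

lemma shatters_mono: "shatters D Y \<Longrightarrow> D \<subseteq> C \<Longrightarrow> shatters C Y"
  unfolding shatters_iff by (meson subsetD)

lemma shatters_empty_iff: "shatters C {} \<longleftrightarrow> C \<noteq> {}"
  unfolding shatters_iff by auto

lemma shatters_cube:
  assumes "T \<inter> Y = {}"
  shows "shatters (cube T Y) Y"
  unfolding shatters_iff
proof (intro allI impI)
  fix P assume "P \<subseteq> Y"
  then have "T \<union> P \<in> cube T Y" "(T \<union> P) \<inter> Y = P"
    using assms unfolding cube_def by auto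
  then show "\<exists>c\<in>cube T Y. c \<inter> Y = P"
    by blast
qed

lemma not_mem_if_shatters_side:
  assumes "shatters D Y" and "D \<subseteq> side x b"
  shows "x \<notin> Y"
proof
  assume "x \<in> Y"
  then obtain c0 c1 where "c0 \<in> D" "c0 \<inter> Y = {}" "c1 \<in> D" "c1 \<inter> Y = {x}"
    using assms(1) unfolding shatters_iff by (metis empty_subsetI insert_subset)
  moreover have "c0 \<in> side x b" "c1 \<in> side x b"
    using subsetD[OF assms(2) \<open>c0 \<in> D\<close>] subsetD[OF assms(2) \<open>c1 \<in> D\<close>] .
  ultimately show False
    using \<open>x \<in> Y\<close> by auto
qed

lemma shatters_flip:
  assumes "x \<notin> Y" and "shatters D Y"
  shows "shatters (flip x ` D) Y"
  unfolding shatters_iff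
proof (intro allI impI)
  fix P assume "P \<subseteq> Y"
  then obtain c where "c \<in> D" "c \<inter> Y = P"
    using assms(2) unfolding shatters_iff by blast
  then show "\<exists>c\<in>flip x ` D. c \<inter> Y = P"
    using flip_inter[OF assms(1)] by blast
qed

lemma shatters_insert:
  assumes D: "shatters D Y" "D \<subseteq> side x b" and D': "shatters D' Y" "D' \<subseteq> side x (\<not> b)"
  shows "shatters (D \<union> D') (insert x Y)"
  unfolding shatters_iff
proof (intro allI impI)
  fix P assume P: "P \<subseteq> insert x Y"
  have "x \<notin> Y"
    using not_mem_if_shatters_side[OF D] .
  have extend: "c \<inter> insert x Y = P" if "c \<inter> Y = P - {x}" and "x \<in> c \<longleftrightarrow> x \<in> P" for c
    using that P \<open>x \<notin> Y\<close> by blast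
  have "P - {x} \<subseteq> Y"
    using P by blast
  then obtain c c' where c: "c \<in> D" "c \<inter> Y = P - {x}" and c': "c' \<in> D'" "c' \<inter> Y = P - {x}"
    using D(1) D'(1) unfolding shatters_iff by meson
  have "x \<in> c \<longleftrightarrow> b" "x \<in> c' \<longleftrightarrow> \<not> b"
    using subsetD[OF D(2) c(1)] subsetD[OF D'(2) c'(1)] by simp_all
  then have "c \<inter> insert x Y = P \<or> c' \<inter> insert x Y = P"
    using extend[OF c(2)] extend[OF c'(2)] by blast
  then show "\<exists>c\<in>D \<union> D'. c \<inter> insert x Y = P"
    using c(1) c'(1) by blast
qed

lemma cube_subset_carrier:
  assumes "cube T (insert x Y) \<subseteq> C" and "x \<notin> T" and "x \<notin> Y"
  shows "cube (if b then insert x T else T) Y \<subseteq> carrier x b C"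
proof
  fix c assume "c \<in> cube (if b then insert x T else T) Y"
  then have "c \<in> cube T (insert x Y)" "flip x c \<in> cube T (insert x Y)" "x \<in> c \<longleftrightarrow> b"
    using assms(2,3) by (cases b; auto simp: cube_eq_interval flip_def)+
  then show "c \<in> carrier x b C"
    using assms(1) unfolding carrier_def by auto
qed

lemma ampleD: "ample X C \<Longrightarrow> shatters C Y \<Longrightarrow> \<exists>T. Y \<subseteq> X \<and> T \<subseteq> X - Y \<and> cube T Y \<subseteq> C"
  unfolding ample_def by blast

lemma carrier_cube_if_shatters_insert:
  assumes "ample X C" and "shatters C (insert x Y)" and "x \<notin> Y"
  shows "\<exists>T. Y \<subseteq> X \<and> T \<subseteq> X - Y \<and> cube T Y \<subseteq> carrier x b C"
proof -
  obtain T where T: "insert x Y \<subseteq> X" "T \<subseteq> X - insert x Y" "cube T (insert x Y) \<subseteq> C"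
    using ampleD[OF assms(1,2)] by blast
  have "cube (if b then insert x T else T) Y \<subseteq> carrier x b C"
    using T(2) by (intro cube_subset_carrier[OF T(3) _ assms(3)]) blast
  moreover have "Y \<subseteq> X" "(if b then insert x T else T) \<subseteq> X - Y"
    using T(1,2) assms(3) by auto
  ultimately show ?thesis
    by blast
qed

lemma ample_carrier:
  assumes "ample X C"
  shows "ample X (carrier x b C)"
  unfolding ample_def
proof (intro allI impI)
  fix Y assume sh: "shatters (carrier x b C) Y"
  have sides: "carrier x b C \<subseteq> side x b" "flip x ` carrier x b C \<subseteq> side x (\<not> b)"
    using carrier_subset flip_carrier_subset by (metis le_inf_iff)+
  then have "x \<notin> Y"
    using not_mem_if_shatters_side[OF sh] by blast
  then have "shatters (carrier x b C \<union> flip x ` carrier x b C) (insert x Y)"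
    using shatters_insert[OF sh sides(1) shatters_flip[OF _ sh] sides(2)] by blast
  moreover have "carrier x b C \<subseteq> C" "flip x ` carrier x b C \<subseteq> C"
    using carrier_subset flip_carrier_subset by (metis le_inf_iff)+
  ultimately have "shatters C (insert x Y)"
    by (metis shatters_mono Un_least)
  then show "\<exists>T. Y \<subseteq> X \<and> T \<subseteq> X - Y \<and> cube T Y \<subseteq> carrier x b C"
    by (rule carrier_cube_if_shatters_insert[OF assms _ \<open>x \<notin> Y\<close>])
qed

lemma ample_halfspace:
  assumes "ample X C"
  shows "ample X (C \<inter> side x b)"
  unfolding ample_def
proof (intro allI impI)
  fix Y assume sh: "shatters (C \<inter> side x b) Y"
  have "x \<notin> Y"
    using not_mem_if_shatters_side[OF sh] by blast
  obtain T where T: "Y \<subseteq> X" "T \<subseteq> X - Y" "cube T Y \<subseteq> C"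
    using ampleD[OF assms shatters_mono[OF sh inf_le1]] by blast
  show "\<exists>T. Y \<subseteq> X \<and> T \<subseteq> X - Y \<and> cube T Y \<subseteq> C \<inter> side x b"
  proof (cases "x \<in> T \<longleftrightarrow> b")
    case True
    then have "cube T Y \<subseteq> side x b"
      using \<open>x \<notin> Y\<close> unfolding cube_eq_interval by auto
    then show ?thesis
      using T by blast
  next
    case False
    then have "cube T Y \<subseteq> side x (\<not> b)"
      using \<open>x \<notin> Y\<close> unfolding cube_eq_interval by auto
    moreover have "shatters (cube T Y) Y"
      using T(2) by (intro shatters_cube) blast
    ultimately have "shatters ((C \<inter> side x b) \<union> cube T Y) (insert x Y)"
      using shatters_insert[OF sh _ _] by blast
    then have "shatters C (insert x Y)"
      by (rule shatters_mono) (use T(3) in blast)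
    then obtain T' where "Y \<subseteq> X" "T' \<subseteq> X - Y" "cube T' Y \<subseteq> carrier x b C"
      by (metis carrier_cube_if_shatters_insert[OF assms _ \<open>x \<notin> Y\<close>])
    moreover have "carrier x b C \<subseteq> C \<inter> side x b"
      by (rule carrier_subset)
    ultimately show ?thesis
      by (meson order_trans)
  qed
qed

lemma ample_singleton:
  assumes "v \<subseteq> X"
  shows "ample X {v}"
  unfolding ample_def
proof (intro allI impI)
  fix Y assume "shatters {v} Y"
  then have "Y = {}"
    unfolding shatters_iff by (metis empty_subsetI singletonD subset_refl)
  moreover have "cube v {} = {v}"
    unfolding cube_def by auto
  ultimately show "\<exists>T. Y \<subseteq> X \<and> T \<subseteq> X - Y \<and> cube T Y \<subseteq> {v}"
    using assms by (intro exI[of _ v]) simp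
qed

lemma carrier_nonempty:
  assumes "ample X C" and "\<And>b. C \<inter> side x b \<noteq> {}"
  shows "carrier x b C \<noteq> {}"
proof -
  have "shatters (C \<inter> side x True \<union> C \<inter> side x False) {x}"
    using assms(2) by (intro shatters_insert) (auto simp: shatters_empty_iff)
  then have "shatters C (insert x {})"
    by (rule shatters_mono) blast
  then obtain T where "cube T {} \<subseteq> carrier x b C"
    using carrier_cube_if_shatters_insert[OF assms(1)] by blast
  moreover have "T \<in> cube T {}"
    unfolding cube_def by auto
  ultimately show ?thesis
    by blast
qed

section \<open>Collapsing ample complexes\<close>

lemma face_of_halfspace_other_side:
  assumes "G \<in> cube_complex X (D \<inter> side x b)" and "b' \<noteq> b"
  shows "G \<inter> side x b' = {}" and "\<not> G \<subseteq> side x b'"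
proof -
  have "G \<subseteq> side x b" "G \<noteq> {}"
    using face_subset_side[OF assms(1)] face_nonempty[OF assms(1)] .
  then show "G \<inter> side x b' = {}" "\<not> G \<subseteq> side x b'"
    using assms(2) unfolding side_def by auto
qed

lemma opposite_face_or_prism_inter_side:
  assumes "G \<in> cube_complex X (D \<inter> side x (\<not> b)) \<union> prism x ` cube_complex X (carrier x b' S)"
  shows "G \<inter> side x b \<subseteq> S \<and> \<not> G \<subseteq> side x b"
  using assms
proof
  assume "G \<in> cube_complex X (D \<inter> side x (\<not> b))"
  from face_of_halfspace_other_side[OF this] show ?thesis
    by simp
next
  assume "G \<in> prism x ` cube_complex X (carrier x b' S)"
  then obtain F where F: "F \<in> cube_complex X (carrier x b' S)" "G = prism x F"
    by blast
  then have "G \<subseteq> S" "\<not> G \<subseteq> side x b"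
    using prism_subset[OF face_subset[OF F(1)]] prism_face_not_subset_side[OF F(1)] by simp_all
  then show ?thesis
    by blast
qed

lemma collapses_halfspace_union:
  assumes collapse: "collapses (cube_complex X (C \<inter> side x b)) (cube_complex X (S \<inter> side x b))"
    and M: "\<And>G. G \<in> M \<Longrightarrow> G \<inter> side x b \<subseteq> S \<and> \<not> G \<subseteq> side x b"
  shows "collapses (cube_complex X (C \<inter> side x b) \<union> M) (cube_complex X (S \<inter> side x b) \<union> M)"
proof (rule collapses_union[OF collapse])
  show "\<forall>F\<in>cube_complex X (C \<inter> side x b) - cube_complex X (S \<inter> side x b). \<forall>G\<in>M. \<not> F \<subset> G"
  proof (intro ballI notI)
    fix F G assume F: "F \<in> cube_complex X (C \<inter> side x b) - cube_complex X (S \<inter> side x b)"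
      and "G \<in> M" and "F \<subset> G"
    have "F \<subseteq> side x b"
      using F face_subset_side by (metis DiffD1)
    then have "F \<subseteq> S \<inter> side x b"
      using M[OF \<open>G \<in> M\<close>] \<open>F \<subset> G\<close> by auto
    then show False
      using F face_of_subclass by (metis DiffD1 DiffD2)
  qed
  show "M \<inter> cube_complex X (C \<inter> side x b) = {}"
    using M face_subset_side by (metis disjoint_iff)
qed

lemma collapses_prism_union:
  assumes collapse: "collapses (cube_complex X (carrier x b C)) (cube_complex X (carrier x b S))"
    and M: "\<And>G. G \<in> M \<Longrightarrow> \<exists>b'. G \<subseteq> side x b'"
  shows "collapses (prism x ` cube_complex X (carrier x b C) \<union> M)
    (prism x ` cube_complex X (carrier x b S) \<union> M)"
proof (rule collapses_union[OF collapses_image[OF collapse]])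
  show "\<forall>F\<in>cube_complex X (carrier x b C). \<forall>G\<in>cube_complex X (carrier x b C).
    prism x F \<subseteq> prism x G \<longleftrightarrow> F \<subseteq> G"
    using prism_subset_prism_iff carrier_face_subset_side by metis
  have "\<not> prism x F \<subseteq> G" if "F \<in> cube_complex X (carrier x b C)" and "G \<in> M" for F G
    using M[OF \<open>G \<in> M\<close>] prism_face_not_subset_side[OF that(1)] by (meson order_trans)
  then show "\<forall>F\<in>prism x ` cube_complex X (carrier x b C) - prism x ` cube_complex X (carrier x b S).
      \<forall>G\<in>M. \<not> F \<subset> G"
    and "M \<inter> prism x ` cube_complex X (carrier x b C) = {}"
    by blast+
qed

lemma collapses_of_halves_and_carriers:
  assumes "x \<in> X" and "S \<subseteq> C"
    and carrier: "collapses (cube_complex X (carrier x False C)) (cube_complex X (carrier x False S))"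
    and upper: "collapses (cube_complex X (C \<inter> side x True)) (cube_complex X (S \<inter> side x True))"
    and lower: "collapses (cube_complex X (C \<inter> side x False)) (cube_complex X (S \<inter> side x False))"
  shows "collapses (cube_complex X C) (cube_complex X S)"
proof -
  let ?Q = "cube_complex X" and ?P = "\<lambda>D. prism x ` cube_complex X (carrier x False D)"
  have decomp: "?Q D = ?Q (D \<inter> side x True) \<union> ?Q (D \<inter> side x False) \<union> ?P D" for D
    using cube_complex_decomp[OF \<open>x \<in> X\<close>, of D True False] by simp
  have "collapses (?P C \<union> (?Q (C \<inter> side x True) \<union> ?Q (C \<inter> side x False)))
      (?P S \<union> (?Q (C \<inter> side x True) \<union> ?Q (C \<inter> side x False)))"
    by (rule collapses_prism_union[OF carrier]) (metis UnE face_subset_side)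
  moreover have "collapses (?Q (C \<inter> side x True) \<union> (?Q (C \<inter> side x False) \<union> ?P S))
      (?Q (S \<inter> side x True) \<union> (?Q (C \<inter> side x False) \<union> ?P S))"
    using opposite_face_or_prism_inter_side[where b = True and D = C]
    by (intro collapses_halfspace_union[OF upper]) simp
  moreover have "collapses (?Q (C \<inter> side x False) \<union> (?Q (S \<inter> side x True) \<union> ?P S))
      (?Q (S \<inter> side x False) \<union> (?Q (S \<inter> side x True) \<union> ?P S))"
    using opposite_face_or_prism_inter_side[where b = False and D = S]
    by (intro collapses_halfspace_union[OF lower]) simp
  moreover have "?Q C = ?P C \<union> (?Q (C \<inter> side x True) \<union> ?Q (C \<inter> side x False))"
    "?P S \<union> (?Q (C \<inter> side x True) \<union> ?Q (C \<inter> side x False))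
      = ?Q (C \<inter> side x True) \<union> (?Q (C \<inter> side x False) \<union> ?P S)"
    "?Q (S \<inter> side x True) \<union> (?Q (C \<inter> side x False) \<union> ?P S)
      = ?Q (C \<inter> side x False) \<union> (?Q (S \<inter> side x True) \<union> ?P S)"
    "?Q (S \<inter> side x False) \<union> (?Q (S \<inter> side x True) \<union> ?P S) = ?Q S"
    using decomp[of C] decomp[of S] by (simp_all only: Un_ac)
  ultimately show ?thesis
    by (metis (no_types, lifting) rtranclp_trans)
qed

lemma collapses_carrier_prisms:
  assumes "finite X"
  shows "collapses (cube_complex X (C \<inter> side x b) \<union> cube_complex X (carrier x (\<not> b) C)
      \<union> prism x ` cube_complex X (carrier x (\<not> b) C)) (cube_complex X (C \<inter> side x b))"
proof (rule collapses_matching)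
  let ?H = "cube_complex X (C \<inter> side x b)" and ?N = "cube_complex X (carrier x (\<not> b) C)"
  have N: "F \<subseteq> side x (\<not> b)" "F \<noteq> {}" if "F \<in> ?N" for F
    using carrier_face_subset_side[OF that] face_nonempty[OF that] .
  have H: "G \<subseteq> side x b" "G \<inter> side x (\<not> b) = {}" if "G \<in> ?H" for G
    using face_subset_side[OF that] face_of_halfspace_other_side(1)[OF that] by simp_all
  have P: "\<not> G \<subseteq> side x b'" if "G \<in> prism x ` ?N" for G b'
    using that prism_face_not_subset_side[of _ X x "\<not> b" C b'] by blast
  show "finite ?N"
    by (rule finite_cube_complex[OF assms])
  show "inj_on (prism x) ?N"
    by (rule inj_on_prism)
  show "F \<subset> prism x F" if "F \<in> ?N" for F
    by (rule face_psubset_prism[OF that])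
  show "?N \<inter> prism x ` ?N = {}"
  proof (rule equals0I)
    fix G assume "G \<in> ?N \<inter> prism x ` ?N"
    then show False
      using N(1)[of G] P[of G "\<not> b"] by blast
  qed
  show "(?N \<union> prism x ` ?N) \<inter> ?H = {}"
  proof (rule equals0I)
    fix G assume G: "G \<in> (?N \<union> prism x ` ?N) \<inter> ?H"
    then have "G \<subseteq> side x b" "G \<inter> side x (\<not> b) = {}"
      using H by blast+
    then show False
      using G N[of G] P[of G b] by blast
  qed
  fix F G assume F: "F \<in> ?N" and G: "G \<in> ?H \<union> ?N \<union> prism x ` ?N" and "F \<subset> G"
  have "G \<notin> ?H"
  proof
    assume "G \<in> ?H"
    then have "F \<inter> side x (\<not> b) = {}"
      using H(2) \<open>F \<subset> G\<close> by blast
    then show False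
      using N[OF F] by blast
  qed
  then consider "G \<in> ?N" | F' where "F' \<in> ?N" "G = prism x F'"
    using G by blast
  then show "G = prism x F \<or> (\<exists>F'\<in>?N. F \<subset> F' \<and> (G = F' \<or> G = prism x F'))"
  proof cases
    case 1
    then show ?thesis
      using \<open>F \<subset> G\<close> by blast
  next
    case (2 F')
    then have "F \<subseteq> F'"
      using \<open>F \<subset> G\<close> prism_inter_side[OF N(1)[OF 2(1)]] N(1)[OF F] by blast
    then show ?thesis
      using 2 by blast
  qed
qed

lemma collapses_onto_halfspace:
  assumes "finite X" and "x \<in> X"
    and collapse: "collapses (cube_complex X (C \<inter> side x (\<not> b))) (cube_complex X (carrier x (\<not> b) C))"
  shows "collapses (cube_complex X C) (cube_complex X (C \<inter> side x b))"
proof -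
  let ?Q = "cube_complex X" and ?N = "cube_complex X (carrier x (\<not> b) C)"
  have carrier_side: "carrier x (\<not> b) C \<inter> side x (\<not> b) = carrier x (\<not> b) C"
    using carrier_subset by (metis inf.absorb1 le_inf_iff)
  have "collapses (?Q (C \<inter> side x (\<not> b)) \<union> (?Q (C \<inter> side x b) \<union> prism x ` ?N))
      (?Q (carrier x (\<not> b) C \<inter> side x (\<not> b)) \<union> (?Q (C \<inter> side x b) \<union> prism x ` ?N))"
  proof (rule collapses_halfspace_union)
    show "collapses (?Q (C \<inter> side x (\<not> b))) (?Q (carrier x (\<not> b) C \<inter> side x (\<not> b)))"
      using collapse by (simp only: carrier_side)
    fix G assume "G \<in> ?Q (C \<inter> side x b) \<union> prism x ` ?N"
    then show "G \<inter> side x (\<not> b) \<subseteq> carrier x (\<not> b) C \<and> \<not> G \<subseteq> side x (\<not> b)"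
    proof
      assume "G \<in> ?Q (C \<inter> side x b)"
      from face_of_halfspace_other_side[OF this] show ?thesis
        by simp
    next
      assume "G \<in> prism x ` ?N"
      then obtain F where F: "F \<in> ?N" "G = prism x F"
        by blast
      then have "G \<inter> side x (\<not> b) = F"
        using prism_inter_side[OF carrier_face_subset_side[OF F(1)]] by simp
      then show ?thesis
        using face_subset[OF F(1)] prism_face_not_subset_side[OF F(1)] F(2) by simp
    qed
  qed
  then have "collapses (?Q C) (?Q (C \<inter> side x b) \<union> ?N \<union> prism x ` ?N)"
    using cube_complex_decomp[OF \<open>x \<in> X\<close>, of C "\<not> b" "\<not> b"]
    by (simp only: carrier_side Un_ac not_not)
  then show ?thesis
    using collapses_carrier_prisms[OF \<open>finite X\<close>] by (rule rtranclp_trans)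
qed

lemma splitting_coordinate:
  assumes "C \<subseteq> Pow X" and "c \<in> C" and "d \<in> C" and "c \<noteq> d"
  obtains x where "x \<in> X" and "\<And>b. C \<inter> side x b \<noteq> {}"
proof -
  obtain x where x: "x \<in> c \<longleftrightarrow> x \<notin> d"
    using \<open>c \<noteq> d\<close> by blast
  then have "x \<in> X"
    using assms(1-3) by blast
  moreover have "C \<inter> side x b \<noteq> {}" for b
    using x assms(2,3) by (cases "x \<in> c \<longleftrightarrow> b") auto
  ultimately show ?thesis
    using that by blast
qed

lemma card_halfspace_less:
  assumes "finite C" and "C \<inter> side x (\<not> b) \<noteq> {}"
  shows "card (C \<inter> side x b) < card C"
proof (rule psubset_card_mono[OF assms(1)])
  show "C \<inter> side x b \<subset> C"
    using assms(2) unfolding side_def by auto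
qed

lemma collapses_to_ample_subclass_step:
  assumes "finite X" and "x \<in> X" and C: "C \<subseteq> Pow X" "ample X C" and C_sides: "\<And>b. C \<inter> side x b \<noteq> {}"
    and S: "ample X S" "S \<subseteq> C" "S \<noteq> {}"
    and IH: "\<And>D D'. card D < card C \<Longrightarrow> D \<subseteq> C \<Longrightarrow> ample X D \<Longrightarrow> ample X D' \<Longrightarrow> D' \<subseteq> D
      \<Longrightarrow> D' \<noteq> {} \<Longrightarrow> collapses (cube_complex X D) (cube_complex X D')"
  shows "collapses (cube_complex X C) (cube_complex X S)"
proof -
  have "finite C"
    using C(1) \<open>finite X\<close> by (meson finite_Pow_iff finite_subset)
  then have smaller: "card (C \<inter> side x b) < card C" for b
    using card_halfspace_less[OF _ C_sides] by blast
  have "S \<subseteq> C \<inter> side x (\<not> b)" if "S \<inter> side x b = {}" for b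
    using that S(2) unfolding side_def by auto
  then consider (both) "\<And>b. S \<inter> side x b \<noteq> {}" | (one) b where "S \<subseteq> C \<inter> side x b"
    by blast
  then show ?thesis
  proof cases
    case both
    show ?thesis
    proof (rule collapses_of_halves_and_carriers[OF \<open>x \<in> X\<close> S(2)])
      have "card (carrier x False C) < card C"
        using smaller card_mono[OF finite_subset[OF _ \<open>finite C\<close>] carrier_subset]
        by (meson inf_le1 le_less_trans)
      then show "collapses (cube_complex X (carrier x False C)) (cube_complex X (carrier x False S))"
        using carrier_subset[of x False C] carrier_mono[OF S(2)] carrier_nonempty[OF S(1) both]
        by (intro IH ample_carrier C(2) S(1)) auto
      have halves: "collapses (cube_complex X (C \<inter> side x b)) (cube_complex X (S \<inter> side x b))" for b
        using smaller both S(2) by (intro IH ample_halfspace C(2) S(1)) auto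
      show "collapses (cube_complex X (C \<inter> side x True)) (cube_complex X (S \<inter> side x True))"
        and "collapses (cube_complex X (C \<inter> side x False)) (cube_complex X (S \<inter> side x False))"
        by (fact halves)+
    qed
  next
    case (one b)
    have "collapses (cube_complex X C) (cube_complex X (C \<inter> side x b))"
      using smaller carrier_subset[of x "\<not> b" C] carrier_nonempty[OF C(2) C_sides]
      by (intro collapses_onto_halfspace[OF \<open>finite X\<close> \<open>x \<in> X\<close>] IH ample_halfspace ample_carrier C(2))
        auto
    moreover have "collapses (cube_complex X (C \<inter> side x b)) (cube_complex X S)"
      using smaller one S by (intro IH ample_halfspace C(2)) auto
    ultimately show ?thesis
      by (rule rtranclp_trans)
  qed
qed

lemma collapses_to_ample_subclass:
  assumes "finite X" and "C \<subseteq> Pow X" and "ample X C" and "ample X S" and "S \<subseteq> C" and "S \<noteq> {}"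
  shows "collapses (cube_complex X C) (cube_complex X S)"
  using assms(2-)
proof (induction "card C" arbitrary: C S rule: less_induct)
  case less
  note C = less.prems(1,2) and S = less.prems(3-5)
  show ?case
  proof (cases "S = C")
    case True
    then show ?thesis
      by simp
  next
    case False
    then obtain c d where "c \<in> S" "d \<in> C" "d \<notin> S"
      using S by blast
    then obtain x where "x \<in> X" and "\<And>b. C \<inter> side x b \<noteq> {}"
      using splitting_coordinate[OF C(1)] S(2) by (metis subsetD)
    moreover have "collapses (cube_complex X D) (cube_complex X D')"
      if "card D < card C" "D \<subseteq> C" "ample X D" "ample X D'" "D' \<subseteq> D" "D' \<noteq> {}" for D D'
      using less.hyps that C(1) by blast
    ultimately show ?thesis
      by (rule collapses_to_ample_subclass_step[OF assms(1) _ C _ S])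
  qed
qed

theorem proposition4p9:
  fixes X :: "'a set" and C :: "'a set set"
  assumes "finite X" and "C \<subseteq> Pow X" and "C \<noteq> {}" and "ample X C"
  shows "collapsible (cube_complex X C)"
proof -
  obtain v where "v \<in> C"
    using assms(3) by blast
  then have "v \<subseteq> X"
    using assms(2) by blast
  have "collapses (cube_complex X C) (cube_complex X {v})"
    using assms \<open>v \<in> C\<close> ample_singleton[OF \<open>v \<subseteq> X\<close>]
    by (intro collapses_to_ample_subclass) auto
  then show ?thesis
    unfolding collapsible_def cube_complex_singleton[OF \<open>v \<subseteq> X\<close>] by blast
qed

end
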